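(* Let $n,d$ be positive integers and let $\vec{G}$ be a digraph of order $n$ with minimum outdegree $\delta^+(\vec{G})\ge d$. Then $\vec{G}$ contains a subdigraph $\vec{H}$ such that (i) $\delta^+(\vec{H})> d/2$; (ii) $\kappa_{\vec{H}}(x,y)\ge d^2/(4n)$ for all pairs of vertices $x,y\in V(\vec{H})$ with $d^-_{\vec{H}}(y)\ge d/2$; (iii) at least $d^2/(4n)$ vertices of $\vec{H}$ have indegree at least $d/2$ in $\vec{H}$.
   Context: Digraphs have no loops, and for any ordered pair of vertices $x,y$ there is at most one edge directed from $x$ to $y$ (there may also be an edge from $y$ to $x$). $\delta^+(\vec{G})$ denotes the minimum outdegree of $\vec{G}$ and $d^-_{\vec{H}}(y)$ the indegree of $y$ in $\vec{H}$. For vertices $x,y$ of a digraph $\vec{G}$, $\kappa_{\vec{G}}(x,y)$ is defined as the largest integer $k$ with $1\le k\le |\vec{G}|-2$ such that for every vertex set $S\subseteq V(\vec{G})\setminus\{x,y\}$ with $|S|<k$, the digraph $\vec{G}-S$ contains a directed path from $x$ to $y$; and $\kappa_{\vec{G}}(x,y):=0$ if $\vec{G}$ contains no directed path from $x$ to $y$. *)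

theory Defs
  imports Complex_Main
begin

definition digraph :: "'a set \<Rightarrow> ('a \<times> 'a) set \<Rightarrow> bool" where
  "digraph V E \<longleftrightarrow> finite V \<and> E \<subseteq> V \<times> V \<and> (\<forall>v. (v, v) \<notin> E)"

definition subdigraph :: "'a set \<Rightarrow> ('a \<times> 'a) set \<Rightarrow> 'a set \<Rightarrow> ('a \<times> 'a) set \<Rightarrow> bool" where
  "subdigraph VH EH V E \<longleftrightarrow> digraph VH EH \<and> VH \<subseteq> V \<and> EH \<subseteq> E"

definition outdeg :: "('a \<times> 'a) set \<Rightarrow> 'a \<Rightarrow> nat" where
  "outdeg E v = card {w. (v, w) \<in> E}"

definition indeg :: "('a \<times> 'a) set \<Rightarrow> 'a \<Rightarrow> nat" where
  "indeg E v = card {u. (u, v) \<in> E}"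

definition min_outdeg :: "'a set \<Rightarrow> ('a \<times> 'a) set \<Rightarrow> nat" where
  "min_outdeg V E = Min (outdeg E ` V)"

definition has_path_avoiding :: "'a set \<Rightarrow> ('a \<times> 'a) set \<Rightarrow> 'a set \<Rightarrow> 'a \<Rightarrow> 'a \<Rightarrow> bool" where
  "has_path_avoiding V E S x y \<longleftrightarrow>
     x \<in> V - S \<and> y \<in> V - S \<and> (x, y) \<in> (E \<inter> ((V - S) \<times> (V - S)))\<^sup>*"

text \<open>Local connectivity kappa(x,y). The upper bound |V|-2 is replaced by max 1 (|V|-2)
  so that the maximum is well defined for digraphs of order at most 2.\<close>
definition kappa :: "'a set \<Rightarrow> ('a \<times> 'a) set \<Rightarrow> 'a \<Rightarrow> 'a \<Rightarrow> nat" where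
  "kappa V E x y =
     (if \<not> has_path_avoiding V E {} x y then 0
      else Max {k. 1 \<le> k \<and> k \<le> max 1 (card V - 2) \<and>
                   (\<forall>S. S \<subseteq> V - {x, y} \<and> card S < k \<longrightarrow> has_path_avoiding V E S x y)})"

end

theory Submission
  imports Defs
begin

text \<open>Put c = d/(2n) and take a smallest nonempty W \<subseteq> V in which every vertex has at least
  d/2 + c|W| out-neighbours; W = V qualifies since d/2 + cn = d. If |S| < d^2/(4n) vertices
  separated x from y in H = G[W], where y has indegree at least d/2, then the set A of vertices
  reachable from x in H - S would qualify as well: each vertex of A loses at most |S| < c(d/2 + 1)
  out-neighbours, while y and its in-neighbours lie outside A, so c|A| \<le> c|W| - c(d/2 + 1).
  This contradicts the minimality of W. Finally, comparing the sum of the outdegrees,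
  at least |W|(d/2 + c|W|), with the sum of the indegrees shows that at least c|W| > cd/2
  vertices of H have indegree at least d/2.\<close>

lemma digraph_induced:
  assumes "digraph V E" "W \<subseteq> V"
  shows "digraph W (E \<inter> W \<times> W)"
  using assms finite_subset unfolding digraph_def by blast

lemma outdeg_less_card:
  assumes "digraph V E" "v \<in> V"
  shows "outdeg E v < card V"
proof -
  have "{w. (v, w) \<in> E} \<subseteq> V - {v}" and "finite V"
    using assms unfolding digraph_def by auto
  then have "outdeg E v \<le> card (V - {v})"
    unfolding outdeg_def by (simp add: card_mono)
  then show ?thesis
    using assms(2) \<open>finite V\<close> card_Diff1_less by fastforce
qed

lemma min_outdeg_le_outdeg: "finite V \<Longrightarrow> v \<in> V \<Longrightarrow> min_outdeg V E \<le> outdeg E v"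
  unfolding min_outdeg_def by simp

lemma le_min_outdeg:
  assumes "finite V" "V \<noteq> {}" "\<And>v. v \<in> V \<Longrightarrow> r \<le> real (outdeg E v)"
  shows "r \<le> real (min_outdeg V E)"
proof -
  have "min_outdeg V E \<in> outdeg E ` V"
    unfolding min_outdeg_def using assms(1,2) by simp
  then show ?thesis using assms(3) by auto
qed

lemma min_outdeg_less_card:
  assumes "digraph V E" "V \<noteq> {}"
  shows "min_outdeg V E < card V"
proof -
  obtain v where "v \<in> V" using assms(2) by blast
  moreover have "finite V" using assms(1) unfolding digraph_def by simp
  ultimately show ?thesis
    using min_outdeg_le_outdeg[of V v E] outdeg_less_card[OF assms(1)] by fastforce
qed

lemma sum_outdeg_eq_card:
  assumes "finite V" "E \<subseteq> V \<times> V"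
  shows "(\<Sum>v\<in>V. outdeg E v) = card E"
proof -
  have "\<forall>v\<in>V. finite {w. (v, w) \<in> E}"
    using assms by (auto intro: finite_subset[of _ V])
  then have "card (SIGMA v:V. {w. (v, w) \<in> E}) = (\<Sum>v\<in>V. outdeg E v)"
    unfolding outdeg_def by (rule card_SigmaI[OF assms(1)])
  moreover have "(SIGMA v:V. {w. (v, w) \<in> E}) = E" using assms(2) by auto
  ultimately show ?thesis by simp
qed

lemma sum_indeg_eq_card:
  assumes "finite V" "E \<subseteq> V \<times> V"
  shows "(\<Sum>v\<in>V. indeg E v) = card E"
proof -
  have "(\<Sum>v\<in>V. indeg E v) = (\<Sum>v\<in>V. outdeg (E\<inverse>) v)"
    unfolding indeg_def outdeg_def by simp
  also have "\<dots> = card (E\<inverse>)"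
    using assms by (intro sum_outdeg_eq_card) auto
  finally show ?thesis by (simp add: card_inverse)
qed

lemma le_card_high_indeg:
  assumes "digraph V E" "V \<noteq> {}" "0 \<le> a"
    and out: "\<And>v. v \<in> V \<Longrightarrow> r \<le> real (outdeg E v)"
  shows "r - a \<le> real (card {v\<in>V. a \<le> real (indeg E v)})"
proof -
  define M where "M = {v\<in>V. a \<le> real (indeg E v)}"
  have fin: "finite V" and EV: "E \<subseteq> V \<times> V" using assms(1) unfolding digraph_def by auto
  have "M \<subseteq> V" unfolding M_def by auto
  have indeg_le: "real (indeg E v) \<le> real (card V)" for v
    using fin EV unfolding indeg_def by (auto intro!: card_mono)
  have "real (card V) * r \<le> (\<Sum>v\<in>V. real (outdeg E v))"
    using sum_bounded_below[of V r "\<lambda>v. real (outdeg E v)"] out by simp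
  also have "\<dots> = (\<Sum>v\<in>V. real (indeg E v))"
    using sum_outdeg_eq_card[OF fin EV] sum_indeg_eq_card[OF fin EV] by (metis of_nat_sum)
  also have "\<dots> = (\<Sum>v\<in>M. real (indeg E v)) + (\<Sum>v\<in>V - M. real (indeg E v))"
    using fin \<open>M \<subseteq> V\<close> by (metis sum.subset_diff add.commute)
  also have "\<dots> \<le> real (card M) * real (card V) + real (card (V - M)) * a"
    using indeg_le
    by (intro add_mono sum_bounded_above) (auto simp: M_def)
  also have "\<dots> \<le> real (card M) * real (card V) + real (card V) * a"
    using assms(3) fin by (simp add: card_mono mult_right_mono)
  finally have "real (card V) * (r - a) \<le> real (card V) * real (card M)"
    by (simp add: algebra_simps)
  moreover have "0 < card V" using fin assms(2) by (simp add: card_gt_0_iff)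
  ultimately show ?thesis unfolding M_def by simp
qed

lemma has_path_avoiding_step:
  assumes "has_path_avoiding V E S x v" "(v, w) \<in> E" "w \<in> V - S"
  shows "has_path_avoiding V E S x w"
  using assms unfolding has_path_avoiding_def by (auto intro: rtrancl_into_rtrancl)

lemma outdeg_le_outdeg_induced_add_card:
  assumes "finite A" "finite S" "v \<in> A" "{w. (v, w) \<in> E} \<subseteq> A \<union> S"
  shows "outdeg E v \<le> outdeg (E \<inter> A \<times> A) v + card S"
proof -
  have "{w. (v, w) \<in> E} \<subseteq> {w. (v, w) \<in> E \<inter> A \<times> A} \<union> S"
    using assms(3,4) by auto
  then have "outdeg E v \<le> card ({w. (v, w) \<in> E \<inter> A \<times> A} \<union> S)"
    unfolding outdeg_def using assms(1,2) by (intro card_mono) (auto intro: finite_subset[of _ A])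
  also have "\<dots> \<le> outdeg (E \<inter> A \<times> A) v + card S"
    unfolding outdeg_def by (rule card_Un_le)
  finally show ?thesis .
qed

lemma card_add_indeg_less_card:
  assumes "digraph V E" "A \<subseteq> V" "y \<in> V - A" "\<And>u. u \<in> A \<Longrightarrow> (u, y) \<notin> E"
  shows "card A + indeg E y < card V"
proof -
  have fin: "finite V" and EV: "E \<subseteq> V \<times> V" and "(y, y) \<notin> E"
    using assms(1) unfolding digraph_def by auto
  have "insert y {u. (u, y) \<in> E} \<subseteq> V - A" using assms(3,4) EV by auto
  moreover have "finite {u. (u, y) \<in> E}" using fin EV by (auto intro: finite_subset[of _ V])
  ultimately have "Suc (indeg E y) \<le> card (V - A)"
    unfolding indeg_def using \<open>(y, y) \<notin> E\<close> fin
    by (metis (no_types, lifting) card_insert_disjoint card_mono finite_Diff mem_Collect_eq)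
  moreover have "card (V - A) = card V - card A" and "card A \<le> card V"
    using assms(2) fin by (auto simp: card_Diff_subset finite_subset card_mono)
  ultimately show ?thesis by linarith
qed

lemma separated_side:
  assumes "digraph W F" "x \<in> W" "y \<in> W" "S \<subseteq> W - {x, y}"
    and sep: "\<not> has_path_avoiding W F S x y"
  obtains A where "x \<in> A" "A \<subseteq> W - S" "\<And>v. v \<in> A \<Longrightarrow> {w. (v, w) \<in> F} \<subseteq> A \<union> S"
    "card A + indeg F y < card W"
proof
  let ?A = "{v. has_path_avoiding W F S x v}"
  show "x \<in> ?A" using assms(2,4) unfolding has_path_avoiding_def by auto
  show AWS: "?A \<subseteq> W - S" unfolding has_path_avoiding_def by auto
  have FW: "F \<subseteq> W \<times> W" using assms(1) unfolding digraph_def by simp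
  show closed: "{w. (v, w) \<in> F} \<subseteq> ?A \<union> S" if "v \<in> ?A" for v
    using that has_path_avoiding_step[of W F S x v] FW by blast
  have "y \<notin> ?A" using sep by simp
  moreover have "(u, y) \<notin> F" if "u \<in> ?A" for u
    using closed[OF that] \<open>y \<notin> ?A\<close> assms(4) by auto
  ultimately show "card ?A + indeg F y < card W"
    using card_add_indeg_less_card[OF assms(1) _ _] AWS assms(3) by blast
qed

definition dense_subset :: "'a set \<Rightarrow> ('a \<times> 'a) set \<Rightarrow> real \<Rightarrow> real \<Rightarrow> 'a set \<Rightarrow> bool" where
  "dense_subset V E a c W \<longleftrightarrow> W \<subseteq> V \<and> W \<noteq> {} \<and>
     (\<forall>v\<in>W. a + c * real (card W) \<le> real (outdeg (E \<inter> W \<times> W) v))"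

lemma dense_subset_card_gt:
  assumes "digraph V E" "0 < c" "dense_subset V E a c W"
  shows "a + 1 < real (card W)"
proof -
  obtain v where v: "v \<in> W" and WV: "W \<subseteq> V"
    and out: "a + c * real (card W) \<le> real (outdeg (E \<inter> W \<times> W) v)"
    using assms(3) unfolding dense_subset_def by auto
  have "outdeg (E \<inter> W \<times> W) v < card W"
    using outdeg_less_card[OF digraph_induced[OF assms(1) WV] v] .
  moreover have "0 < c * real (card W)"
    using assms(2) v \<open>outdeg (E \<inter> W \<times> W) v < card W\<close> by simp
  ultimately show ?thesis using out by linarith
qed

lemma dense_subset_self:
  assumes "digraph V E" "V \<noteq> {}" "a + c * real (card V) \<le> real (min_outdeg V E)"
  shows "dense_subset V E a c V"
proof -
  have "finite V" and "E \<inter> V \<times> V = E" using assms(1) unfolding digraph_def by auto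
  then show ?thesis
    unfolding dense_subset_def using assms(2,3) min_outdeg_le_outdeg[of V _ E]
    by (auto intro: order_trans)
qed

lemma dense_subset_min_outdeg:
  assumes "digraph V E" "dense_subset V E a c W"
  shows "a + c * real (card W) \<le> real (min_outdeg W (E \<inter> W \<times> W))"
proof -
  have "digraph W (E \<inter> W \<times> W)"
    using assms digraph_induced unfolding dense_subset_def by blast
  then show ?thesis
    using assms(2) unfolding dense_subset_def digraph_def by (intro le_min_outdeg) auto
qed

lemma dense_subset_card_high_indeg:
  assumes "digraph V E" "0 \<le> a" "dense_subset V E a c W"
  shows "c * real (card W) \<le> real (card {v\<in>W. a \<le> real (indeg (E \<inter> W \<times> W) v)})"
proof -
  have WV: "W \<subseteq> V" and "W \<noteq> {}"
    and out: "\<And>v. v \<in> W \<Longrightarrow> a + c * real (card W) \<le> real (outdeg (E \<inter> W \<times> W) v)"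
    using assms(3) unfolding dense_subset_def by auto
  show ?thesis
    using le_card_high_indeg[OF digraph_induced[OF assms(1) WV] \<open>W \<noteq> {}\<close> assms(2) out] by simp
qed

lemma minimal_dense_subset_path:
  assumes dig: "digraph V E" and "0 \<le> c" and W: "dense_subset V E a c W"
    and minimal: "\<And>W'. dense_subset V E a c W' \<Longrightarrow> card W \<le> card W'"
    and "x \<in> W" "y \<in> W" "S \<subseteq> W - {x, y}"
    and small: "real (card S) \<le> c * (real (indeg (E \<inter> W \<times> W) y) + 1)"
  shows "has_path_avoiding W (E \<inter> W \<times> W) S x y"
proof (rule ccontr)
  define F where "F = E \<inter> W \<times> W"
  have WV: "W \<subseteq> V" using W unfolding dense_subset_def by simp
  have digF: "digraph W F" unfolding F_def using digraph_induced[OF dig WV] .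
  assume "\<not> has_path_avoiding W (E \<inter> W \<times> W) S x y"
  then obtain A where "x \<in> A" and AWS: "A \<subseteq> W - S"
    and closed: "\<And>v. v \<in> A \<Longrightarrow> {w. (v, w) \<in> F} \<subseteq> A \<union> S"
    and card_A: "card A + indeg F y < card W"
    using separated_side[OF digF assms(5-7)] unfolding F_def by blast
  have "finite A" "finite S"
    using AWS assms(7) digF unfolding digraph_def by (auto intro: finite_subset)
  have "a + c * real (card A) \<le> real (outdeg (E \<inter> A \<times> A) v)" if "v \<in> A" for v
  proof -
    have "real (card A) \<le> real (card W) - (real (indeg F y) + 1)" using card_A by linarith
    then have "c * real (card A) \<le> c * (real (card W) - (real (indeg F y) + 1))"
      using \<open>0 \<le> c\<close> by (rule mult_left_mono)
    also have "\<dots> \<le> real (outdeg F v) - a - real (card S)"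
    proof -
      have "a + c * real (card W) \<le> real (outdeg F v)"
        using W that AWS unfolding dense_subset_def F_def by auto
      then show ?thesis using small unfolding right_diff_distrib F_def by linarith
    qed
    also have "\<dots> \<le> real (outdeg (E \<inter> A \<times> A) v) - a"
    proof -
      have "F \<inter> A \<times> A = E \<inter> A \<times> A" using AWS unfolding F_def by auto
      then have "outdeg F v \<le> outdeg (E \<inter> A \<times> A) v + card S"
        using outdeg_le_outdeg_induced_add_card[OF \<open>finite A\<close> \<open>finite S\<close> that closed[OF that]]
        by simp
      then show ?thesis by linarith
    qed
    finally show ?thesis by simp
  qed
  then have "dense_subset V E a c A"
    using AWS WV \<open>x \<in> A\<close> unfolding dense_subset_def by auto
  then show False using minimal card_A by fastforce
qed

lemma kappa_geI:
  assumes "0 < k" "k \<le> max 1 (real (card V) - 2)"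
    and no_sep: "\<And>S. S \<subseteq> V - {x, y} \<Longrightarrow> real (card S) < k \<Longrightarrow> has_path_avoiding V E S x y"
  shows "k \<le> real (kappa V E x y)"
proof -
  define K where "K = nat \<lceil>k\<rceil>"
  define T where "T = {j. 1 \<le> j \<and> j \<le> max 1 (card V - 2) \<and>
    (\<forall>S. S \<subseteq> V - {x, y} \<and> card S < j \<longrightarrow> has_path_avoiding V E S x y)}"
  have "1 \<le> K" using assms(1) unfolding K_def by linarith
  moreover have "K \<le> max 1 (card V - 2)"
  proof (cases "k \<le> 1")
    case True
    then show ?thesis unfolding K_def by linarith
  next
    case False
    then have "k \<le> real (card V - 2)" using assms(2) by (simp add: of_nat_diff)
    then show ?thesis unfolding K_def by (simp add: ceiling_le_iff nat_le_iff)
  qed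
  moreover have "has_path_avoiding V E S x y" if "S \<subseteq> V - {x, y}" "card S < K" for S
    using no_sep[OF that(1)] that(2) unfolding K_def
    by (metis less_ceiling_iff of_int_of_nat_eq zless_nat_eq_int_zless)
  ultimately have "K \<in> T" unfolding T_def by blast
  moreover have "finite T"
    unfolding T_def by (rule finite_subset[of _ "{..max 1 (card V - 2)}"]) auto
  moreover have "has_path_avoiding V E {} x y" using no_sep[of "{}"] assms(1) by simp
  ultimately have "K \<le> kappa V E x y" unfolding kappa_def T_def by simp
  moreover have "k \<le> real K" unfolding K_def by linarith
  ultimately show ?thesis by linarith
qed

lemma square_div_le_max_card:
  fixes d n m :: nat
  assumes "0 < d" "d < n" "real d / 2 + 1 < real m"
  shows "(real d)\<^sup>2 / (4 * real n) \<le> max 1 (real m - 2)"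
proof (cases "(real d)\<^sup>2 / (4 * real n) \<le> 1")
  case False
  then have "4 * real n < real d * real d" using assms(2) by (simp add: power2_eq_square field_simps)
  moreover have "real d < real n" using assms(2) by simp
  ultimately have "4 * real d < real d * real d" by linarith
  then have "4 < real d" using assms(1) by simp
  moreover have "(real d)\<^sup>2 / (4 * real n) < real d / 4"
    using assms(1,2) by (simp add: power2_eq_square field_simps)
  ultimately show ?thesis using assms(3) by linarith
qed simp

theorem lemma4:
  fixes V :: "'a set" and E :: "('a \<times> 'a) set" and n d :: nat
  assumes "n > 0" and "d > 0"
    and "digraph V E" and "card V = n"
    and "min_outdeg V E \<ge> d"
  shows "\<exists>VH EH. subdigraph VH EH V E \<and> VH \<noteq> {} \<and>
           real (min_outdeg VH EH) > real d / 2 \<and>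
           (\<forall>x\<in>VH. \<forall>y\<in>VH. real (indeg EH y) \<ge> real d / 2 \<longrightarrow>
               real (kappa VH EH x y) \<ge> (real d)\<^sup>2 / (4 * real n)) \<and>
           real (card {v\<in>VH. real (indeg EH v) \<ge> real d / 2}) \<ge> (real d)\<^sup>2 / (4 * real n)"
proof -
  define c where "c = real d / (2 * real n)"
  define k where "k = (real d)\<^sup>2 / (4 * real n)"
  have "0 < c" "0 < k" using assms(1,2) unfolding c_def k_def by simp_all
  have k_eq: "k = c * (real d / 2)" unfolding c_def k_def by (simp add: power2_eq_square)
  have "V \<noteq> {}" using assms(1,4) by auto
  then have "d < n" using min_outdeg_less_card[OF assms(3)] assms(4,5) by simp
  have "real d / 2 + c * real (card V) = real d" using assms(1,4) unfolding c_def by simp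
  then have "dense_subset V E (real d / 2) c V"
    using dense_subset_self[OF assms(3) \<open>V \<noteq> {}\<close>] assms(5) by simp
  then obtain W where W: "dense_subset V E (real d / 2) c W"
    and minimal: "\<And>W'. dense_subset V E (real d / 2) c W' \<Longrightarrow> card W \<le> card W'"
    using ex_has_least_nat[of "dense_subset V E (real d / 2) c" V card] by blast
  define F where "F = E \<inter> W \<times> W"
  have "subdigraph W F V E" "W \<noteq> {}"
    using W digraph_induced[OF assms(3)] unfolding dense_subset_def subdigraph_def F_def by auto
  have big: "real d / 2 + 1 < real (card W)" using dense_subset_card_gt[OF assms(3) \<open>0 < c\<close> W] .
  then have k_le: "k \<le> c * real (card W)"
    unfolding k_eq using \<open>0 < c\<close> by (intro mult_left_mono) auto
  have "real d / 2 < real (min_outdeg W F)"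
    using dense_subset_min_outdeg[OF assms(3) W] k_le \<open>0 < k\<close> unfolding F_def by linarith
  moreover have "k \<le> real (kappa W F x y)"
    if "x \<in> W" "y \<in> W" and y_in: "real d / 2 \<le> real (indeg F y)" for x y
  proof (rule kappa_geI)
    show "k \<le> max 1 (real (card W) - 2)"
      unfolding k_def using square_div_le_max_card[OF assms(2) \<open>d < n\<close> big] .
    fix S assume S: "S \<subseteq> W - {x, y}" "real (card S) < k"
    have "k \<le> c * real (indeg F y)" unfolding k_eq using y_in \<open>0 < c\<close> by (intro mult_left_mono) auto
    then have "real (card S) \<le> c * (real (indeg F y) + 1)" using S(2) \<open>0 < c\<close> by (simp add: distrib_left)
    then show "has_path_avoiding W F S x y"
      using minimal_dense_subset_path[OF assms(3) _ W minimal that(1,2) S(1)] \<open>0 < c\<close>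
      unfolding F_def by simp
  qed (fact \<open>0 < k\<close>)
  moreover have "k \<le> real (card {v\<in>W. real d / 2 \<le> real (indeg F v)})"
    using dense_subset_card_high_indeg[OF assms(3) _ W] k_le unfolding F_def by simp
  ultimately show ?thesis using \<open>subdigraph W F V E\<close> \<open>W \<noteq> {}\<close> unfolding k_def by blast
qed

end
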